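(* Let $F$ be a hypergraph with $i(F)=\{I_1,\dots,I_k\}$. Let $H,H_1,H_2$ be hypergraphs with $H=H_1\cup H_2$, and let $S$ be a set with $V(H_1)\cap V(H_2)\subseteq S$ and $S\subseteq V(H_1)\cap V(H_2)$. Let $A_1,\dots,A_k\in tr_S(i(H))$ be such that $\{\bigcap_{i:x\in I_i}A_i\}_{x\in V(F)}$ covers $S$. Then the following are equivalent: (1) $f_H^S(A_1,\dots,A_k)=1$; (2) there exist $A_i^j\in tr_S(i(H_j))$ for $i\in[k]$, $j\in[2]$, with $A_i\subseteq A_i^1\cap A_i^2$ for all $i$, and $f_{H_j}^S(A_1^j,\dots,A_k^j)=1$ for $j=1,2$.
   Context: A hypergraph $H$ has a finite vertex set $V(H)$ and a set $E(H)$ of subsets of $V(H)$. A set of vertices is independent if it contains no edge; $i(H)$ is the family of inclusion-wise maximal independent sets. $H=H_1\cup H_2$ means $V(H)=V(H_1)\cup V(H_2)$ and $E(H)=E(H_1)\cup E(H_2)$. $tr_S(\mathcal{F})=\{X\cap S:X\in\mathcal{F}\}$. A family of sets covers a set $Y$ if its union contains $Y$. An intersection over an empty family is taken to be the whole ambient vertex set. For a hypergraph $H$ and $S\subseteq V(H)$, $f_H^S(A_1,\dots,A_k)=1$ iff: (a) there exist $J_1,\dots,J_k\in i(H)$ such that $\{\bigcap_{i:x\in I_i}J_i\}_{x\in V(F)}$ covers $V(H)$; (b) $\{\bigcap_{i:x\in I_i}A_i\}_{x\in V(F)}$ covers $S$; and (c) $A_i\subseteq J_i$ for all $i$ (with the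 same $J_i$ as in (a)); otherwise $f_H^S(A_1,\dots,A_k)=0$. *)

theory Defs
  imports Main
begin

type_synonym 'a hypergraph = "'a set \<times> 'a set set"

definition verts :: "'a hypergraph \<Rightarrow> 'a set" where "verts H = fst H"
definition edges :: "'a hypergraph \<Rightarrow> 'a set set" where "edges H = snd H"

definition hypergraph :: "'a hypergraph \<Rightarrow> bool" where
  "hypergraph H \<longleftrightarrow> finite (verts H) \<and> (\<forall>e\<in>edges H. e \<subseteq> verts H)"

definition hunion :: "'a hypergraph \<Rightarrow> 'a hypergraph \<Rightarrow> 'a hypergraph" where
  "hunion H1 H2 = (verts H1 \<union> verts H2, edges H1 \<union> edges H2)"

definition independent :: "'a hypergraph \<Rightarrow> 'a set \<Rightarrow> bool" where
  "independent H X \<longleftrightarrow> X \<subseteq> verts H \<and> (\<forall>e\<in>edges H. \<not> e \<subseteq> X)"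

definition mis :: "'a hypergraph \<Rightarrow> 'a set set" where
  "mis H = {X. independent H X \<and> (\<forall>Y. independent H Y \<and> X \<subseteq> Y \<longrightarrow> Y = X)}"

definition tr :: "'a set \<Rightarrow> 'a set set \<Rightarrow> 'a set set" where
  "tr S \<F> = {X \<inter> S | X. X \<in> \<F>}"

text \<open>The intersection of X_i over all i < k with x in I_i, inside the ambient set U
  (empty intersection = U).\<close>
definition gint :: "'a set \<Rightarrow> nat \<Rightarrow> (nat \<Rightarrow> 'b set) \<Rightarrow> (nat \<Rightarrow> 'a set) \<Rightarrow> 'b \<Rightarrow> 'a set" where
  "gint U k I X x = U \<inter> (\<Inter>i\<in>{i. i < k \<and> x \<in> I i}. X i)"

definition covers :: "'a set \<Rightarrow> nat \<Rightarrow> 'b hypergraph \<Rightarrow> (nat \<Rightarrow> 'b set) \<Rightarrow> (nat \<Rightarrow> 'a set) \<Rightarrow> 'a set \<Rightarrow> bool" where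
  "covers U k F I X Y \<longleftrightarrow> Y \<subseteq> (\<Union>x\<in>verts F. gint U k I X x)"

text \<open>f_H^S(A_1..A_k), relative to F with i(F) = {I_1..I_k}.\<close>
definition fHS :: "'b hypergraph \<Rightarrow> nat \<Rightarrow> (nat \<Rightarrow> 'b set) \<Rightarrow> 'a hypergraph \<Rightarrow> 'a set
    \<Rightarrow> (nat \<Rightarrow> 'a set) \<Rightarrow> bool" where
  "fHS F k I H S A \<longleftrightarrow> (\<exists>J. (\<forall>i<k. J i \<in> mis H)
      \<and> covers (verts H) k F I J (verts H)
      \<and> covers (verts H) k F I A S
      \<and> (\<forall>i<k. A i \<subseteq> J i))"

end

theory Submission
  imports Defs
begin

text \<open>Forward direction: restrict each witness J_i of f_H^S to V(H_j) and extend it to a maximal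
  independent set of H_j; restriction to S gives A_i^j. Backward direction: given witnesses
  J_i^1, J_i^2 for H_1, H_2, the set (J_i^1 - S) \<union> (J_i^2 - S) \<union> A_i is independent in H, because
  V(H_1) \<inter> V(H_2) \<subseteq> S makes its trace on V(H_j) lie inside J_i^j; any maximal independent
  extension then witnesses f_H^S, covering S through the A_i and V(H_j) - S through the J_i^j.\<close>

lemma verts_hunion [simp]: "verts (hunion H1 H2) = verts H1 \<union> verts H2"
  and edges_hunion [simp]: "edges (hunion H1 H2) = edges H1 \<union> edges H2"
  by (simp_all add: hunion_def verts_def edges_def)

lemma hypergraph_hunion:
  "hypergraph H1 \<Longrightarrow> hypergraph H2 \<Longrightarrow> hypergraph (hunion H1 H2)"
  by (auto simp: hypergraph_def)

lemma independent_extends_to_mis: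
  assumes "hypergraph H" "independent H X"
  shows "\<exists>Y\<in>mis H. X \<subseteq> Y"
proof -
  let ?A = "{Y. independent H Y \<and> X \<subseteq> Y}"
  have "?A \<subseteq> Pow (verts H)" by (auto simp: independent_def)
  moreover have "finite (Pow (verts H))" using assms(1) by (simp add: hypergraph_def)
  ultimately have "finite ?A" by (rule finite_subset)
  moreover have "?A \<noteq> {}" using assms(2) by auto
  ultimately obtain m where m: "m \<in> ?A" "\<forall>b\<in>?A. m \<le> b \<longrightarrow> m = b"
    by (meson finite_has_maximal)
  then have "m \<in> mis H" unfolding mis_def by auto
  with m(1) show ?thesis by blast
qed

lemma mis_independent: "X \<in> mis H \<Longrightarrow> independent H X"
  by (simp add: mis_def)

lemma independent_restrict:
  "independent H X \<Longrightarrow> edges H' \<subseteq> edges H \<Longrightarrow> independent H' (X \<inter> verts H')"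
  unfolding independent_def by blast

lemma independent_hunion_glue:
  assumes "hypergraph H1" "hypergraph H2" "verts H1 \<inter> verts H2 \<subseteq> S"
    and "independent H1 X1" "independent H2 X2" "B \<subseteq> X1 \<inter> X2"
  shows "independent (hunion H1 H2) ((X1 - S) \<union> (X2 - S) \<union> B)"
    (is "independent _ ?K")
proof -
  have X1: "X1 \<subseteq> verts H1" "\<forall>e\<in>edges H1. \<not> e \<subseteq> X1"
    and X2: "X2 \<subseteq> verts H2" "\<forall>e\<in>edges H2. \<not> e \<subseteq> X2"
    using assms(4,5) by (simp_all add: independent_def)
  have "\<not> e \<subseteq> ?K" if "e \<in> edges H1" for e
  proof -
    have "e \<subseteq> verts H1" using that assms(1) by (auto simp: hypergraph_def)
    moreover have "?K \<inter> verts H1 \<subseteq> X1" using X2(1) assms(3,6) by blast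
    ultimately show ?thesis using that X1(2) by blast
  qed
  moreover have "\<not> e \<subseteq> ?K" if "e \<in> edges H2" for e
  proof -
    have "e \<subseteq> verts H2" using that assms(2) by (auto simp: hypergraph_def)
    moreover have "?K \<inter> verts H2 \<subseteq> X2" using X1(1) assms(3,6) by blast
    ultimately show ?thesis using that X2(2) by blast
  qed
  moreover have "?K \<subseteq> verts H1 \<union> verts H2" using X1(1) X2(1) assms(6) by blast
  ultimately show ?thesis by (auto simp: independent_def)
qed

lemma covers_transfer:
  assumes "covers U k F I X Y" "Y' \<subseteq> Y" "Y' \<subseteq> U'"
    and "\<And>i y. i < k \<Longrightarrow> y \<in> Y' \<Longrightarrow> y \<in> X i \<Longrightarrow> y \<in> X' i"
  shows "covers U' k F I X' Y'"
  unfolding covers_def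
proof
  fix y assume y: "y \<in> Y'"
  then obtain x where x: "x \<in> verts F" "y \<in> gint U k I X x"
    using assms(1,2) unfolding covers_def by blast
  have "y \<in> gint U' k I X' x" using x(2) y assms(3,4) by (auto simp: gint_def)
  with x(1) show "y \<in> (\<Union>x\<in>verts F. gint U' k I X' x)" by blast
qed

lemma covers_Un:
  "covers U k F I X Y \<Longrightarrow> covers U k F I X Y' \<Longrightarrow> covers U k F I X (Y \<union> Y')"
  by (simp add: covers_def)

lemma fHS_subhypergraph:
  assumes "hypergraph H'" "verts H' \<subseteq> verts H" "edges H' \<subseteq> edges H"
    and "S \<subseteq> verts H'" "\<forall>i<k. A i \<subseteq> S" and "fHS F k I H S A"
  shows "\<exists>A'. (\<forall>i<k. A' i \<in> tr S (mis H') \<and> A i \<subseteq> A' i) \<and> fHS F k I H' S A'"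
proof -
  obtain J where J: "\<forall>i<k. J i \<in> mis H" "covers (verts H) k F I J (verts H)"
      "covers (verts H) k F I A S" "\<forall>i<k. A i \<subseteq> J i"
    using assms(6) unfolding fHS_def by blast
  have "\<exists>Y\<in>mis H'. J i \<inter> verts H' \<subseteq> Y" if "i < k" for i
    using that J(1) assms(1,3)
    by (blast intro: independent_extends_to_mis independent_restrict mis_independent)
  then obtain J' where J': "\<And>i. i < k \<Longrightarrow> J' i \<in> mis H' \<and> J i \<inter> verts H' \<subseteq> J' i"
    by metis
  define A' where "A' i = J' i \<inter> S" for i
  have A': "A' i \<in> tr S (mis H') \<and> A i \<subseteq> A' i" if "i < k" for i
    using that J' J(4) assms(4,5) unfolding A'_def tr_def by blast
  have "covers (verts H') k F I J' (verts H')"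
    by (rule covers_transfer[OF J(2) assms(2) subset_refl]) (use J' in blast)
  moreover have "covers (verts H') k F I A' S"
    by (rule covers_transfer[OF J(3) subset_refl assms(4)]) (use A' in blast)
  ultimately have "fHS F k I H' S A'"
    unfolding fHS_def A'_def using J' by blast
  with A' show ?thesis by blast
qed

lemma fHS_hunion:
  assumes "hypergraph H1" "hypergraph H2" "verts H1 \<inter> verts H2 \<subseteq> S"
    and "covers (verts H1 \<union> verts H2) k F I A S"
    and "\<forall>i<k. A i \<subseteq> S \<inter> A1 i \<inter> A2 i"
    and "fHS F k I H1 S A1" "fHS F k I H2 S A2"
  shows "fHS F k I (hunion H1 H2) S A"
proof -
  obtain J1 where J1: "\<forall>i<k. J1 i \<in> mis H1" "covers (verts H1) k F I J1 (verts H1)"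
      "\<forall>i<k. A1 i \<subseteq> J1 i"
    using assms(6) unfolding fHS_def by blast
  obtain J2 where J2: "\<forall>i<k. J2 i \<in> mis H2" "covers (verts H2) k F I J2 (verts H2)"
      "\<forall>i<k. A2 i \<subseteq> J2 i"
    using assms(7) unfolding fHS_def by blast
  define K where "K i = (J1 i - S) \<union> (J2 i - S) \<union> A i" for i
  have "\<exists>Y\<in>mis (hunion H1 H2). K i \<subseteq> Y" if "i < k" for i
  proof -
    have "A i \<subseteq> J1 i \<inter> J2 i" using that J1(3) J2(3) assms(5) by blast
    then have "independent (hunion H1 H2) (K i)"
      unfolding K_def using that J1(1) J2(1)
      by (intro independent_hunion_glue assms(1-3) mis_independent) auto
    then show ?thesis
      using independent_extends_to_mis hypergraph_hunion[OF assms(1,2)] by blast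
  qed
  then obtain J where J: "\<And>i. i < k \<Longrightarrow> J i \<in> mis (hunion H1 H2) \<and> K i \<subseteq> J i"
    by metis
  let ?V = "verts H1 \<union> verts H2"
  have S_V: "S \<subseteq> ?V" using assms(4) by (auto simp: covers_def gint_def)
  then have "covers ?V k F I J S"
    by (rule covers_transfer[OF assms(4) subset_refl]) (use J in \<open>auto simp: K_def\<close>)
  moreover have "covers ?V k F I J (verts H1 - S)"
    by (rule covers_transfer[OF J1(2) Diff_subset]) (use J in \<open>auto simp: K_def\<close>)
  moreover have "covers ?V k F I J (verts H2 - S)"
    by (rule covers_transfer[OF J2(2) Diff_subset]) (use J in \<open>auto simp: K_def\<close>)
  ultimately have "covers ?V k F I J (S \<union> (verts H1 - S) \<union> (verts H2 - S))"
    by (rule covers_Un[OF covers_Un])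
  moreover have "S \<union> (verts H1 - S) \<union> (verts H2 - S) = ?V" using S_V by blast
  ultimately have "covers ?V k F I J ?V" by simp
  then show ?thesis
    unfolding fHS_def using J assms(4) by (auto simp: K_def)
qed

theorem mainTheorem13:
  fixes F :: "'b hypergraph" and I :: "nat \<Rightarrow> 'b set" and k :: nat
    and H H1 H2 :: "'a hypergraph" and S :: "'a set" and A :: "nat \<Rightarrow> 'a set"
  assumes "hypergraph F" and "hypergraph H1" and "hypergraph H2"
    and "mis F = I ` {..<k}" and "inj_on I {..<k}"
    and "H = hunion H1 H2"
    and "verts H1 \<inter> verts H2 \<subseteq> S" and "S \<subseteq> verts H1 \<inter> verts H2"
    and "\<forall>i<k. A i \<in> tr S (mis H)"
    and "covers (verts H) k F I A S"
  shows "fHS F k I H S A \<longleftrightarrow>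
    (\<exists>A1 A2. (\<forall>i<k. A1 i \<in> tr S (mis H1) \<and> A2 i \<in> tr S (mis H2) \<and> A i \<subseteq> A1 i \<inter> A2 i)
       \<and> fHS F k I H1 S A1 \<and> fHS F k I H2 S A2)"
proof -
  have A_S: "\<forall>i<k. A i \<subseteq> S" using assms(9) unfolding tr_def by blast
  show ?thesis
  proof
    assume f: "fHS F k I H S A"
    obtain A1 where "\<forall>i<k. A1 i \<in> tr S (mis H1) \<and> A i \<subseteq> A1 i" "fHS F k I H1 S A1"
      using fHS_subhypergraph[OF assms(2) _ _ _ A_S f] assms(6,8) by auto
    moreover obtain A2 where "\<forall>i<k. A2 i \<in> tr S (mis H2) \<and> A i \<subseteq> A2 i" "fHS F k I H2 S A2"
      using fHS_subhypergraph[OF assms(3) _ _ _ A_S f] assms(6,8) by auto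
    ultimately show "\<exists>A1 A2. (\<forall>i<k. A1 i \<in> tr S (mis H1) \<and> A2 i \<in> tr S (mis H2)
        \<and> A i \<subseteq> A1 i \<inter> A2 i) \<and> fHS F k I H1 S A1 \<and> fHS F k I H2 S A2"
      by blast
  next
    assume "\<exists>A1 A2. (\<forall>i<k. A1 i \<in> tr S (mis H1) \<and> A2 i \<in> tr S (mis H2)
        \<and> A i \<subseteq> A1 i \<inter> A2 i) \<and> fHS F k I H1 S A1 \<and> fHS F k I H2 S A2"
    then obtain A1 A2 where "\<forall>i<k. A i \<subseteq> A1 i \<inter> A2 i"
      and f1: "fHS F k I H1 S A1" and f2: "fHS F k I H2 S A2" by blast
    with A_S have "\<forall>i<k. A i \<subseteq> S \<inter> A1 i \<inter> A2 i" by blast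
    moreover have "covers (verts H1 \<union> verts H2) k F I A S" using assms(6,10) by simp
    ultimately show "fHS F k I H S A"
      unfolding assms(6) by (rule fHS_hunion[OF assms(2,3,7) _ _ f1 f2, rotated])
  qed
qed

end
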